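(* In the situation of Lemma 7.1 (i.e. $X$ periodic, $e\in E(X)$, $Z_n=\{z\in Z(X):z^n\in H_e\}$, and $Z_\ell\setminus H_e$ infinite for some $\ell\in\mathbb N$), one can find a set $F'\subseteq X$ with at most two elements and an infinite set $A'\subseteq Z_\ell$ such that $A'A'\subseteq F'\cup H_e$ and $A'\cap F'X^1=\emptyset$.
   Context: Periodic: every element has an idempotent power. $E(X)$: idempotents; $H_e$: maximal subgroup containing $e$; $Z(X)$: center. $X^1=X\cup\{1\}$ with adjoined identity, $F'X^1=\{fx:f\in F',x\in X^1\}$, $A'A'=\{ab:a,b\in A'\}$. *)

theory Defs
  imports Main
begin

(* The semigroup X is the whole type 'a :: semigroup_mult. *)

fun spow :: "'a::semigroup_mult \<Rightarrow> nat \<Rightarrow> 'a" where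
  "spow x (Suc 0) = x"
| "spow x (Suc (Suc n)) = x * spow x (Suc n)"

definition idempotents :: "'a::semigroup_mult set" where
  "idempotents = {e. e * e = e}"

definition periodic_sg :: "'a::semigroup_mult itself \<Rightarrow> bool" where
  "periodic_sg _ \<longleftrightarrow> (\<forall>x::'a. \<exists>n\<ge>1. spow x n \<in> idempotents)"

(* maximal subgroup H_e containing the idempotent e: the group of units of eXe *)
definition maxsubgroup :: "'a::semigroup_mult \<Rightarrow> 'a set" where
  "maxsubgroup e = {x. e * x = x \<and> x * e = x \<and>
      (\<exists>y. e * y = y \<and> y * e = y \<and> x * y = e \<and> y * x = e)}"

definition center :: "'a::semigroup_mult set" where
  "center = {z. \<forall>x. z * x = x * z}"

definition Zset :: "'a::semigroup_mult \<Rightarrow> nat \<Rightarrow> 'a set" where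
  "Zset e n = {z \<in> center. spow z n \<in> maxsubgroup e}"

(* F X^1 = { f x : f in F, x in X \<union> {1} } = F \<union> F X *)
definition right_ideal1 :: "'a::semigroup_mult set \<Rightarrow> 'a set" where
  "right_ideal1 F = F \<union> {f * x | f x. f \<in> F}"

definition setprod :: "'a::semigroup_mult set \<Rightarrow> 'a set" where
  "setprod A = {a * b | a b. a \<in> A \<and> b \<in> A}"

end

theory Submission
  imports Defs "HOL-Library.Ramsey"
begin

text \<open>
  Write \<open>Z = Z\<^sub>l\<close> and \<open>H = H\<^sub>e\<close>. A central \<open>z\<close> with \<open>z\<^sup>l \<in> H\<close> and \<open>z e = z\<close> already lies
  in \<open>H\<close>; hence \<open>Z \<inter> H\<close> is an ideal of \<open>Z\<close>, and \<open>w \<in> Z - H\<close> avoids \<open>F X\<^sup>1\<close> as soon as every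
  element of \<open>F\<close> lies in \<open>H\<close> or in \<open>w Z\<close>. It therefore suffices to find an infinite
  \<open>A \<subseteq> Z - H\<close> with \<open>A A \<subseteq> F \<union> H\<close> and \<open>F \<subseteq> w Z \<union> H\<close> for all \<open>w \<in> A\<close>.

  If \<open>Z \<inter> H\<close> is infinite, take \<open>A' = Z \<inter> H\<close> and \<open>F' = {}\<close>. If some \<open>b Z\<close> is infinite, a power
  \<open>c\<close> of \<open>b\<close> has \<open>c Z\<close> infinite but \<open>c\<^sup>2 Z\<close> finite, and the pigeonhole principle applied to
  \<open>w \<mapsto> w c\<close> on \<open>c Z\<close> gives an infinite set on which all products coincide. Otherwise all
  \<open>b Z\<close> are finite: a greedy choice gives an injective sequence \<open>x\<^sub>i\<close> in \<open>Z - H\<close> with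
  \<open>x\<^sub>i x\<^sub>j\<close> independent of \<open>j > i\<close>, and Ramsey's theorem makes every monomial
  \<open>x\<^sub>i\<^sup>a x\<^sub>i\<^sub>+\<^sub>1\<^sup>s\<close> with \<open>a, s < l\<close> constant or injective in \<open>i\<close> along an infinite index set.
  Take an injective one with \<open>a + s\<close> maximal: products of two of its values are monomials
  with larger exponent sum, so each of the two product shapes is constant or lies in \<open>H\<close>.
\<close>

lemma spow_Suc: "n \<ge> 1 \<Longrightarrow> spow x (Suc n) = x * spow x n"
  by (cases n) auto

lemma spow_add: "n \<ge> 1 \<Longrightarrow> m \<ge> 1 \<Longrightarrow> spow x n * spow x m = spow x (n + m)"
  by (induction n rule: nat_induct_at_least) (simp_all add: spow_Suc mult.assoc)

lemma spow_Suc_right: "n \<ge> 1 \<Longrightarrow> spow x (Suc n) = spow x n * x"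
  using spow_add[of n 1 x] by simp

lemma centerD: "a \<in> center \<Longrightarrow> a * x = x * a"
  unfolding center_def by auto

lemma center_left_commute:
  assumes "c \<in> center"
  shows "x * (c * y) = c * (x * y)"
proof -
  have "x * (c * y) = (x * c) * y"
    by (simp add: mult.assoc)
  also have "\<dots> = (c * x) * y"
    using centerD[OF assms, of x] by simp
  finally show ?thesis
    by (simp add: mult.assoc)
qed

lemma mult_mem_center:
  assumes "a \<in> center" "b \<in> center"
  shows "a * b \<in> center"
proof -
  have "a * b * x = x * (a * b)" for x
    by (metis centerD[OF assms(1), of x] centerD[OF assms(2), of x] mult.assoc)
  then show ?thesis
    unfolding center_def by blast
qed

lemma spow_mem_center:
  assumes "a \<in> center" "n \<ge> 1"
  shows "spow a n \<in> center"
  using assms(2) by (induction n rule: nat_induct_at_least) (simp_all add: assms spow_Suc mult_mem_center)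

lemma spow_mult_central:
  assumes "a \<in> center" "n \<ge> 1"
  shows "spow (a * b) n = spow a n * spow b n"
  using assms(2)
proof (induction n rule: nat_induct_at_least)
  case (Suc n)
  have "spow (a * b) (Suc n) = a * (b * (spow a n * spow b n))"
    using Suc by (simp add: spow_Suc mult.assoc)
  also have "\<dots> = a * (spow a n * (b * spow b n))"
    using center_left_commute[OF spow_mem_center[OF assms(1) Suc(1)]] by simp
  finally show ?case
    using Suc(1) by (simp add: spow_Suc mult.assoc)
qed simp

lemma maxsubgroupD: "x \<in> maxsubgroup e \<Longrightarrow> e * x = x \<and> x * e = x"
  unfolding maxsubgroup_def by auto

lemma maxsubgroup_mult:
  assumes "x \<in> maxsubgroup e" "y \<in> maxsubgroup e"
  shows "x * y \<in> maxsubgroup e"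
proof -
  obtain x' where x: "e * x = x" "x * e = x" "e * x' = x'" "x' * e = x'" "x * x' = e" "x' * x = e"
    using assms(1) unfolding maxsubgroup_def by auto
  obtain y' where y: "e * y = y" "y * e = y" "e * y' = y'" "y' * e = y'" "y * y' = e" "y' * y = e"
    using assms(2) unfolding maxsubgroup_def by auto
  have "x * y * (y' * x') = x * (y * y') * x'" "y' * x' * (x * y) = y' * (x' * x) * y"
    by (simp_all add: mult.assoc)
  then have "x * y * (y' * x') = e" "y' * x' * (x * y) = e"
    using x y by (simp_all add: mult.assoc[symmetric])
  moreover have "e * (x * y) = x * y" "x * y * e = x * y"
    "e * (y' * x') = y' * x'" "y' * x' * e = y' * x'"
    using x y by (simp_all add: mult.assoc[symmetric]) (simp_all add: mult.assoc)
  ultimately show ?thesis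
    unfolding maxsubgroup_def by blast
qed

text \<open>The inverse of \<open>z\<close> is \<open>z\<^sup>n\<^sup>-\<^sup>1\<close> times the inverse of \<open>z\<^sup>n\<close>.\<close>

lemma central_mem_maxsubgroup:
  assumes z: "z \<in> center" "z * e = z" and zn: "spow z n \<in> maxsubgroup e" "n \<ge> 1"
  shows "z \<in> maxsubgroup e"
proof (cases "n = 1")
  case True
  then show ?thesis using zn by simp
next
  case False
  then obtain m where m: "n = Suc m" "m \<ge> 1"
    using zn(2) by (cases n) auto
  obtain w where w: "e * w = w" "w * e = w" "spow z n * w = e" "w * spow z n = e"
    using zn(1) unfolding maxsubgroup_def by auto
  define q where "q = spow z m"
  have qc: "q \<in> center"
    unfolding q_def using spow_mem_center[OF z(1) m(2)] .
  have zq: "z * q = spow z n"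
    unfolding q_def by (simp add: m(1) spow_Suc[OF m(2)])
  have "e * (q * w) = q * w"
    using center_left_commute[OF qc, of e w] w(1) by simp
  moreover have "q * w * e = q * w" "z * (q * w) = e"
    using w zq by (simp_all add: mult.assoc[symmetric]) (simp add: mult.assoc)
  moreover have "q * w * z = e"
    using centerD[OF z(1), of "q * w"] zq w(3) by (simp add: mult.assoc[symmetric])
  moreover have "e * z = z"
    using centerD[OF z(1)] z(2) by simp
  ultimately show ?thesis
    unfolding maxsubgroup_def using z(2) by blast
qed

lemma right_fixpoint_power:
  assumes "w = w * b * x" "b \<in> center" "n \<ge> 1"
  shows "w = w * spow b n * spow x n"
  using assms(3)
proof (induction n rule: nat_induct_at_least)
  case (Suc n)
  have "w = w * b * x * spow b n * spow x n"
    using Suc.IH assms(1) by simp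
  also have "\<dots> = w * b * spow b n * (x * spow x n)"
    using center_left_commute[OF spow_mem_center[OF assms(2) Suc(1)], of x] by (simp add: mult.assoc)
  finally show ?case
    using Suc(1) by (simp add: spow_Suc mult.assoc)
qed (use assms(1) in simp)

lemma infinite_subset_constant_or_inj:
  fixes g :: "'b \<Rightarrow> 'a"
  assumes "infinite Y0"
  obtains Y where "Y \<subseteq> Y0" "infinite Y" "inj_on g Y \<or> (\<forall>i\<in>Y. \<forall>j\<in>Y. g i = g j)"
proof -
  define colour :: "'b set \<Rightarrow> nat" where "colour X = (if card (g ` X) = 1 then 0 else 1)" for X
  have colour_pair: "colour {i, j} = 0 \<longleftrightarrow> g i = g j" for i j
    by (cases "g i = g j") (simp_all add: colour_def)
  have two_colours: "\<forall>i\<in>Y0. \<forall>j\<in>Y0. i \<noteq> j \<longrightarrow> colour {i, j} < 2"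
    by (simp add: colour_def)
  obtain Y t where Y: "Y \<subseteq> Y0" "infinite Y"
    and mono: "\<forall>i\<in>Y. \<forall>j\<in>Y. i \<noteq> j \<longrightarrow> colour {i, j} = t"
    using Ramsey2[OF assms two_colours] by blast
  have "g i = g j \<longleftrightarrow> t = 0" if "i \<in> Y" "j \<in> Y" "i \<noteq> j" for i j
    using mono that colour_pair by metis
  then have "inj_on g Y \<or> (\<forall>i\<in>Y. \<forall>j\<in>Y. g i = g j)"
    unfolding inj_on_def by metis
  with Y that show ?thesis
    by blast
qed

lemma infinite_subset_constant_or_inj_family:
  fixes g :: "'p \<Rightarrow> 'b \<Rightarrow> 'a"
  assumes "finite P" "infinite Y0"
  obtains Y where "Y \<subseteq> Y0" "infinite Y"
    "\<And>p. p \<in> P \<Longrightarrow> inj_on (g p) Y \<or> (\<forall>i\<in>Y. \<forall>j\<in>Y. g p i = g p j)"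
proof -
  have "\<exists>Y\<subseteq>Y0. infinite Y \<and> (\<forall>p\<in>P. inj_on (g p) Y \<or> (\<forall>i\<in>Y. \<forall>j\<in>Y. g p i = g p j))"
    using assms(1)
  proof (induction P rule: finite_induct)
    case empty
    then show ?case
      using assms(2) by blast
  next
    case (insert p P)
    then obtain Y1 where Y1: "Y1 \<subseteq> Y0" "infinite Y1"
      "\<forall>p\<in>P. inj_on (g p) Y1 \<or> (\<forall>i\<in>Y1. \<forall>j\<in>Y1. g p i = g p j)"
      by blast
    obtain Y2 where "Y2 \<subseteq> Y1" "infinite Y2" "inj_on (g p) Y2 \<or> (\<forall>i\<in>Y2. \<forall>j\<in>Y2. g p i = g p j)"
      using infinite_subset_constant_or_inj[OF Y1(2)] by blast
    with Y1 show ?case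
      by (intro exI[of _ Y2]) (blast dest: inj_on_subset)
  qed
  with that show ?thesis
    by blast
qed

lemma infinite_subset_constant_left_mult:
  fixes c :: "'a::times"
  assumes "infinite T" "finite ((\<lambda>y. c * y) ` T)"
  obtains T' where "T' \<subseteq> T" "infinite T'" "\<And>y z. y \<in> T' \<Longrightarrow> z \<in> T' \<Longrightarrow> c * y = c * z"
proof -
  obtain y0 where "infinite {y \<in> T. c * y = c * y0}"
    using pigeonhole_infinite[OF assms] by blast
  moreover have "c * y = c * z" if "y \<in> {y \<in> T. c * y = c * y0}" "z \<in> {y \<in> T. c * y = c * y0}" for y z
    using that by simp
  ultimately show ?thesis
    using that[of "{y \<in> T. c * y = c * y0}"] by blast
qed

text \<open>Greedy construction: each new term is chosen inside an infinite set on which the left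
  multiplication by all earlier terms is constant.\<close>

lemma infinite_sequence_stable_products:
  fixes S :: "'a::times set"
  assumes "infinite S" and fin: "\<And>x. x \<in> S \<Longrightarrow> finite ((\<lambda>y. x * y) ` S)"
  obtains x :: "nat \<Rightarrow> 'a" where "inj x" "range x \<subseteq> S"
    "\<And>i j k. i < j \<Longrightarrow> i < k \<Longrightarrow> x i * x j = x i * x k"
proof -
  define P :: "'a \<times> 'a set \<Rightarrow> bool"
    where "P p \<longleftrightarrow> fst p \<in> S \<and> snd p \<subseteq> S \<and> infinite (snd p) \<and> fst p \<notin> snd p \<and>
      (\<forall>y\<in>snd p. \<forall>z\<in>snd p. fst p * y = fst p * z)" for p
  define r :: "(('a \<times> 'a set) \<times> ('a \<times> 'a set)) set"
    where "r = {(p, q). fst q \<in> snd p \<and> snd q \<subseteq> snd p}"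
  have step: "\<exists>x' T'. P (x', T') \<and> x' \<in> T \<and> T' \<subseteq> T" if "T \<subseteq> S" "infinite T" for T
  proof -
    obtain x' where x': "x' \<in> T"
      using infinite_imp_nonempty[OF \<open>infinite T\<close>] by blast
    have "infinite (T - {x'})" "finite ((\<lambda>y. x' * y) ` (T - {x'}))"
      using that x' fin[of x'] by (auto intro: finite_subset[rotated])
    then obtain T' where "T' \<subseteq> T - {x'}" "infinite T'" "\<And>y z. y \<in> T' \<Longrightarrow> z \<in> T' \<Longrightarrow> x' * y = x' * z"
      by (rule infinite_subset_constant_left_mult) blast
    then show ?thesis
      using that x' unfolding P_def fst_conv snd_conv by (intro exI[of _ x'] exI[of _ T']) blast
  qed
  obtain x0 T0 where "P (x0, T0)"
    using step[OF order.refl assms(1)] by blast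
  moreover have "trans r"
    unfolding r_def trans_def by auto
  moreover have "\<exists>q. P q \<and> (p, q) \<in> r" if "P p" for p
  proof -
    have "snd p \<subseteq> S" "infinite (snd p)"
      using that unfolding P_def by auto
    then obtain x' T' where "P (x', T')" "x' \<in> snd p" "T' \<subseteq> snd p"
      using step by blast
    then show ?thesis
      unfolding r_def by (intro exI[of _ "(x', T')"]) simp
  qed
  ultimately obtain f :: "nat \<Rightarrow> 'a \<times> 'a set" where f: "\<And>n. P (f n)" and fr: "\<And>n m. n < m \<Longrightarrow> (f n, f m) \<in> r"
    using dependent_choice by metis
  define x where "x n = fst (f n)" for n
  have later: "x m \<in> snd (f n)" if "n < m" for n m
    using fr[OF that] unfolding r_def x_def by simp
  have own: "x n \<in> S" "x n \<notin> snd (f n)" "\<forall>y\<in>snd (f n). \<forall>z\<in>snd (f n). x n * y = x n * z" for n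
    using f[of n] unfolding P_def x_def by blast+
  have "inj x"
  proof (rule injI)
    fix n m assume "x n = x m"
    then show "n = m"
      using later[of n m] later[of m n] own(2)[of n] own(2)[of m] by (cases n m rule: linorder_cases) auto
  qed
  moreover have "range x \<subseteq> S"
    using own(1) by blast
  moreover have "x i * x j = x i * x k" if "i < j" "i < k" for i j k
    using own(3)[of i] later that by blast
  ultimately show ?thesis
    using that by blast
qed

lemma infinite_subset_constant_products:
  fixes c :: "'a::semigroup_mult"
  assumes c: "c \<in> center" and S: "S \<subseteq> center"
    and inf: "infinite ((\<lambda>z. c * z) ` S)" and fin: "finite ((\<lambda>z. c * c * z) ` S)"
  obtains A r where "A \<subseteq> (\<lambda>z. c * z) ` S" "infinite A" "\<And>w w'. w \<in> A \<Longrightarrow> w' \<in> A \<Longrightarrow> w * w' = r"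
proof -
  define W where "W = (\<lambda>z. c * z) ` S"
  have "(\<lambda>w. w * c) ` W \<subseteq> (\<lambda>z. c * c * z) ` S"
  proof
    fix v assume "v \<in> (\<lambda>w. w * c) ` W"
    then obtain z where z: "z \<in> S" "v = c * z * c"
      unfolding W_def by auto
    then have "v = c * c * z"
      using centerD[of z c] S by (auto simp: mult.assoc)
    with z show "v \<in> (\<lambda>z. c * c * z) ` S"
      by blast
  qed
  then have "finite ((\<lambda>w. w * c) ` W)"
    using fin finite_subset by blast
  then obtain w0 where w0: "w0 \<in> W" and A_inf: "infinite {w \<in> W. w * c = w0 * c}"
    using pigeonhole_infinite inf unfolding W_def by blast
  define A where "A = {w \<in> W. w * c = w0 * c}"
  have A_center: "A \<subseteq> center"
    unfolding A_def W_def using c S mult_mem_center by blast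
  text \<open>For \<open>w' = c z'\<close> the product \<open>w w' = (w c) z'\<close> does not depend on \<open>w \<in> A\<close>.\<close>
  have left_free: "w * w' = w0 * w'" if w: "w \<in> A" and w': "w' \<in> A" for w w'
  proof -
    obtain z' where "w' = c * z'"
      using w' unfolding A_def W_def by blast
    then have "w * w' = (w * c) * z'" "w0 * w' = (w0 * c) * z'"
      by (simp_all add: mult.assoc)
    moreover have "w * c = w0 * c"
      using w unfolding A_def by simp
    ultimately show ?thesis
      by simp
  qed
  have "w0 \<in> A"
    unfolding A_def using w0 by simp
  have "w * w' = w0 * w0" if "w \<in> A" "w' \<in> A" for w w'
    using left_free[OF that] left_free[OF \<open>w' \<in> A\<close> \<open>w0 \<in> A\<close>] centerD A_center that(2)
    by (metis subsetD)
  then show ?thesis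
    using that[of A "w0 * w0"] A_inf unfolding A_def W_def by blast
qed

locale stable_sequence =
  fixes x :: "nat \<Rightarrow> 'a::semigroup_mult"
  assumes central: "x i \<in> center"
    and stable: "i < j \<Longrightarrow> i < k \<Longrightarrow> x i * x j = x i * x k"
begin

lemma stable_power_left:
  assumes "i < j" "i < k" "a \<ge> 1"
  shows "spow (x i) a * x j = spow (x i) a * x k"
  using assms(3)
proof (induction a rule: nat_induct_at_least)
  case (Suc a)
  then show ?case
    using stable[OF assms(1,2)] by (simp add: spow_Suc_right mult.assoc)
qed (use stable[OF assms(1,2)] in simp)

lemma stable_powers:
  assumes "i < j" "i < k" "a \<ge> 1" "n \<ge> 1"
  shows "spow (x i) a * spow (x j) n = spow (x i) a * spow (x k) n"
  using assms(4)
proof (induction n rule: nat_induct_at_least)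
  case (Suc n)
  have "spow (x i) a * spow (x j) (Suc n) = (spow (x i) a * spow (x j) n) * x j"
    using Suc(1) by (simp add: spow_Suc_right mult.assoc)
  also have "\<dots> = spow (x i) a * spow (x k) n * x j"
    using Suc.IH by simp
  also have "\<dots> = spow (x i) a * x j * spow (x k) n"
    using centerD[OF spow_mem_center[OF central[of k] Suc(1)], of "x j"] by (simp add: mult.assoc)
  also have "\<dots> = spow (x i) a * spow (x k) (Suc n)"
    using stable_power_left[OF assms(1-3)] Suc(1) by (simp add: spow_Suc mult.assoc)
  finally show ?case .
qed (use stable_power_left[OF assms(1-3)] in simp)

text \<open>The monomial \<open>x\<^sub>i\<^sup>a x\<^sub>i\<^sub>+\<^sub>1\<^sup>s\<close> of \<open>X\<^sup>1\<close>; the factor \<open>x\<^sub>i\<^sub>+\<^sub>1\<^sup>0 = 1\<close> has to be dropped by hand.\<close>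

definition monomial :: "nat \<Rightarrow> nat \<Rightarrow> nat \<Rightarrow> 'a" where
  "monomial i a s = (if s = 0 then spow (x i) a else spow (x i) a * spow (x (Suc i)) s)"

lemma monomial_mem_center: "a \<ge> 1 \<Longrightarrow> monomial i a s \<in> center"
  by (simp add: monomial_def spow_mem_center central mult_mem_center)

lemma monomial_mult_later:
  assumes "i < j" "a \<ge> 1" "n \<ge> 1"
  shows "monomial i a s * spow (x j) n = monomial i a (s + n)"
proof (cases "s = 0")
  case True
  then show ?thesis
    using stable_powers[OF assms(1) _ assms(2,3), of "Suc i"] assms(3) by (simp add: monomial_def)
next
  case False
  then have "s \<ge> 1"
    by simp
  have "monomial i a s * spow (x j) n = spow (x i) a * spow (x j) n * spow (x (Suc i)) s"
    using False centerD[OF spow_mem_center[OF central[of "Suc i"] \<open>s \<ge> 1\<close>], of "spow (x j) n"]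
    by (simp add: monomial_def mult.assoc)
  also have "\<dots> = spow (x i) a * (spow (x (Suc i)) n * spow (x (Suc i)) s)"
    using stable_powers[OF assms(1) _ assms(2,3), of "Suc i"] by (simp add: mult.assoc)
  finally show ?thesis
    using False assms(3) by (simp add: monomial_def spow_add add.commute)
qed

lemma monomial_mult_monomial_later:
  assumes "i < j" "a \<ge> 1"
  shows "monomial i a s * monomial j a s = monomial i a (2 * s + a)"
proof (cases "s = 0")
  case True
  then show ?thesis
    using monomial_mult_later[OF assms(1,2,2)] by (simp add: monomial_def[of j])
next
  case False
  have "monomial i a s * monomial j a s = monomial i a (s + a) * spow (x (Suc j)) s"
    using False monomial_mult_later[OF assms(1,2,2)] by (simp add: monomial_def[of j] mult.assoc[symmetric])
  also have "\<dots> = monomial i a (s + a + s)"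
    using False monomial_mult_later[of i "Suc j" a s "s + a"] assms by simp
  finally show ?thesis
    by (simp add: mult_2 add.commute add.left_commute)
qed

lemma monomial_square:
  assumes "a \<ge> 1"
  shows "monomial i a s * monomial i a s = monomial i (2 * a) (2 * s)"
proof (cases "s = 0")
  case True
  then show ?thesis
    using spow_add[OF assms assms] by (simp add: monomial_def mult_2)
next
  case False
  have "monomial i a s * monomial i a s
      = spow (x i) a * (spow (x (Suc i)) s * (spow (x i) a * spow (x (Suc i)) s))"
    using False by (simp add: monomial_def mult.assoc)
  also have "\<dots> = spow (x i) a * (spow (x i) a * (spow (x (Suc i)) s * spow (x (Suc i)) s))"
    using center_left_commute[OF spow_mem_center[OF central assms], of "spow (x (Suc i)) s"] by simp
  also have "\<dots> = (spow (x i) a * spow (x i) a) * (spow (x (Suc i)) s * spow (x (Suc i)) s)"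
    by (simp add: mult.assoc)
  finally show ?thesis
    using False assms spow_add[OF assms assms, of "x i"] spow_add[of s s "x (Suc i)"]
    by (simp add: monomial_def mult_2)
qed

lemma monomial_double_tail:
  assumes "a \<ge> 1"
  shows "monomial i a (2 * s + a) = monomial i a s * spow (x (Suc i)) (s + a)"
  using monomial_mult_later[of i "Suc i" a "s + a" s] assms by (simp add: mult_2 add.assoc)

end

locale Zset_setting =
  fixes e :: "'a::semigroup_mult" and l :: nat
  assumes l_pos: "l \<ge> 1"
begin

abbreviation H :: "'a set" where "H \<equiv> maxsubgroup e"
abbreviation Z :: "'a set" where "Z \<equiv> Zset e l"

lemma ZsetD: "z \<in> Z \<Longrightarrow> z \<in> center \<and> spow z l \<in> H"
  unfolding Zset_def by auto

lemma Zset_mult: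
  assumes "a \<in> Z" "b \<in> Z"
  shows "a * b \<in> Z"
proof -
  have "a \<in> center" "b \<in> center" "spow a l \<in> H" "spow b l \<in> H"
    using ZsetD assms by auto
  moreover have "spow (a * b) l = spow a l * spow b l"
    using spow_mult_central[OF _ l_pos] \<open>a \<in> center\<close> by blast
  ultimately show ?thesis
    unfolding Zset_def by (simp add: mult_mem_center maxsubgroup_mult)
qed

lemma spow_mem_Zset:
  assumes "z \<in> Z" "n \<ge> 1"
  shows "spow z n \<in> Z"
  using assms(2) by (induction n rule: nat_induct_at_least) (simp_all add: assms(1) spow_Suc Zset_mult)

lemma mem_maxsubgroup_if_right_unit: "z \<in> Z \<Longrightarrow> z * e = z \<Longrightarrow> z \<in> H"
  using central_mem_maxsubgroup ZsetD l_pos by blast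

lemma Zset_mult_maxsubgroup:
  assumes "z \<in> Z" "h \<in> Z" "h \<in> H"
  shows "z * h \<in> H"
proof -
  have "z * h * e = z * h"
    using maxsubgroupD[OF assms(3)] by (simp add: mult.assoc)
  then show ?thesis
    using mem_maxsubgroup_if_right_unit Zset_mult assms(1,2) by blast
qed

lemma spow_mem_maxsubgroup:
  assumes "z \<in> Z" "n \<ge> l"
  shows "spow z n \<in> H"
proof (cases "n = l")
  case True
  then show ?thesis
    using ZsetD assms(1) by blast
next
  case False
  then have "spow z n = spow z (n - l) * spow z l"
    using spow_add[of "n - l" l z] l_pos assms(2) by simp
  then show ?thesis
    using Zset_mult_maxsubgroup spow_mem_Zset ZsetD assms l_pos False by simp
qed

text \<open>From \<open>w = w b x\<close> one gets \<open>w = w b\<^sup>l x\<^sup>l\<close>, and \<open>b\<^sup>l \<in> H\<close> absorbs \<open>e\<close>.\<close>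

lemma mem_maxsubgroup_if_right_divisor:
  assumes w: "w \<in> Z" and b: "b \<in> Z" and eq: "w = w * b * x"
  shows "w \<in> H"
proof -
  have bl: "spow b l \<in> center" "spow b l \<in> H"
    using ZsetD[OF b] spow_mem_center l_pos by auto
  define v where "v = w * spow x l"
  have "w = w * spow b l * spow x l"
    using right_fixpoint_power[OF eq] ZsetD[OF b] l_pos by blast
  also have "\<dots> = v * spow b l"
    unfolding v_def using centerD[OF bl(1)] by (simp add: mult.assoc)
  finally have w_v: "w = v * spow b l" .
  then have "w * e = v * (spow b l * e)"
    by (simp add: mult.assoc)
  also have "\<dots> = w"
    using maxsubgroupD[OF bl(2)] w_v by simp
  finally show ?thesis
    using mem_maxsubgroup_if_right_unit w by blast
qed

lemma not_mem_right_ideal1: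
  assumes w: "w \<in> Z" "w \<notin> H" and F: "\<And>f. f \<in> F \<Longrightarrow> f \<in> H \<or> (\<exists>b\<in>Z. f = w * b)"
  shows "w \<notin> right_ideal1 F"
proof
  assume "w \<in> right_ideal1 F"
  then obtain f where "f \<in> F" and wf: "w = f \<or> (\<exists>x. w = f * x)"
    unfolding right_ideal1_def by auto
  with F consider "f \<in> H" | b where "b \<in> Z" "f = w * b"
    by blast
  then show False
  proof cases
    case 1
    then have "e * w = w"
      using wf maxsubgroupD[OF 1] by (auto simp: mult.assoc[symmetric])
    then have "w * e = w"
      using centerD[of w e] ZsetD[OF w(1)] by simp
    then show False
      using mem_maxsubgroup_if_right_unit w by blast
  next
    case 2
    have "\<exists>x. w = w * b * x"
      using wf
    proof
      assume "w = f"
      then have "w * b = w"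
        using 2(2) by simp
      then show ?thesis
        by (intro exI[of _ b]) simp
    qed (use 2(2) in simp)
    then show False
      using mem_maxsubgroup_if_right_divisor 2(1) w by blast
  qed
qed

definition witness_pair :: "'a set \<Rightarrow> 'a set \<Rightarrow> bool" where
  "witness_pair F A \<longleftrightarrow> finite F \<and> card F \<le> 2 \<and> infinite A \<and> A \<subseteq> Z \<and>
     setprod A \<subseteq> F \<union> H \<and> A \<inter> right_ideal1 F = {}"

lemma witness_pairI:
  assumes "A \<subseteq> Z - H" "infinite A" "finite F" "card F \<le> 2"
    and "\<And>a b. a \<in> A \<Longrightarrow> b \<in> A \<Longrightarrow> a * b \<in> F \<union> H"
    and "\<And>w f. w \<in> A \<Longrightarrow> f \<in> F \<Longrightarrow> f \<in> H \<or> (\<exists>b\<in>Z. f = w * b)"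
  shows "witness_pair F A"
proof -
  have "w \<notin> right_ideal1 F" if "w \<in> A" for w
    using not_mem_right_ideal1[of w F] assms(1,6) that by blast
  moreover have "setprod A \<subseteq> F \<union> H"
    unfolding setprod_def using assms(5) by blast
  ultimately show ?thesis
    unfolding witness_pair_def using assms(1-4) by blast
qed

lemma witness_pair_Zset_inter_maxsubgroup:
  assumes "infinite (Z \<inter> H)"
  shows "witness_pair {} (Z \<inter> H)"
  unfolding witness_pair_def setprod_def right_ideal1_def
  using assms Zset_mult_maxsubgroup by auto

lemma infinite_Diff_maxsubgroup:
  assumes "finite (Z \<inter> H)" "A \<subseteq> Z" "infinite A"
  shows "infinite (A - H)"
proof -
  have "finite (A \<inter> H)"
    using assms(1,2) finite_subset[of "A \<inter> H" "Z \<inter> H"] by blast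
  then have "infinite (A - A \<inter> H)"
    using Diff_infinite_finite assms(3) by blast
  moreover have "A - A \<inter> H = A - H"
    by blast
  ultimately show ?thesis
    by simp
qed

lemma multiples_subset_Zset_inter_maxsubgroup:
  assumes "h \<in> Z" "h \<in> H"
  shows "(\<lambda>z. h * z) ` Z \<subseteq> Z \<inter> H"
proof
  fix v assume "v \<in> (\<lambda>z. h * z) ` Z"
  then obtain z where z: "z \<in> Z" "v = h * z"
    by blast
  moreover have "h * z = z * h"
    using centerD ZsetD assms(1) by blast
  ultimately show "v \<in> Z \<inter> H"
    using Zset_mult_maxsubgroup[OF z(1) assms] Zset_mult[OF z(1) assms(1)] by simp
qed

text \<open>Take \<open>c = b\<^sup>m\<close> with \<open>m\<close> maximal such that \<open>b\<^sup>m Z\<close> is infinite; \<open>m < l\<close> because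
  \<open>b\<^sup>l Z \<subseteq> Z \<inter> H\<close>.\<close>

lemma power_with_finite_square_multiples:
  assumes fin: "finite (Z \<inter> H)" and b: "b \<in> Z" and inf: "infinite ((\<lambda>z. b * z) ` Z)"
  obtains c where "c \<in> Z" "infinite ((\<lambda>z. c * z) ` Z)" "finite ((\<lambda>z. c * c * z) ` Z)"
proof -
  define S where "S = {m. m \<ge> 1 \<and> infinite ((\<lambda>z. spow b m * z) ` Z)}"
  have "m < l" if "m \<in> S" for m
  proof (rule ccontr)
    assume "\<not> m < l"
    then have "(\<lambda>z. spow b m * z) ` Z \<subseteq> Z \<inter> H"
      using multiples_subset_Zset_inter_maxsubgroup spow_mem_maxsubgroup spow_mem_Zset b l_pos
      by simp
    then show False
      using that fin finite_subset unfolding S_def by blast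
  qed
  then have "finite S"
    by (meson finite_nat_set_iff_bounded)
  moreover have "1 \<in> S"
    unfolding S_def using inf by simp
  ultimately have m: "Max S \<in> S"
    using Max_in by blast
  have "Max S + Max S \<notin> S"
  proof
    assume "Max S + Max S \<in> S"
    then have "Max S + Max S \<le> Max S"
      using Max_ge \<open>finite S\<close> by blast
    moreover have "Max S \<ge> 1"
      using m unfolding S_def by simp
    ultimately show False
      by simp
  qed
  moreover have "spow b (Max S) * spow b (Max S) = spow b (Max S + Max S)"
    using m spow_add unfolding S_def by blast
  ultimately show ?thesis
    using that[of "spow b (Max S)"] m spow_mem_Zset[OF b] unfolding S_def by auto
qed

lemma witness_pair_if_infinite_multiples:
  assumes fin: "finite (Z \<inter> H)" and "b \<in> Z" "infinite ((\<lambda>z. b * z) ` Z)"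
  shows "\<exists>F A. witness_pair F A"
proof -
  obtain c where c: "c \<in> Z" "infinite ((\<lambda>z. c * z) ` Z)" "finite ((\<lambda>z. c * c * z) ` Z)"
    using power_with_finite_square_multiples assms by blast
  obtain A r where A: "A \<subseteq> (\<lambda>z. c * z) ` Z" "infinite A"
    and r: "\<And>w w'. w \<in> A \<Longrightarrow> w' \<in> A \<Longrightarrow> w * w' = r"
    using infinite_subset_constant_products[OF _ _ c(2,3)] ZsetD c(1) by blast
  have AZ: "A \<subseteq> Z"
    using A(1) Zset_mult c(1) by blast
  have "r \<in> H \<or> (\<exists>b\<in>Z. r = w * b)" if "w \<in> A - H" for w
    using r[of w w] that AZ by blast
  then have "witness_pair {r} (A - H)"
    using witness_pairI[of "A - H" "{r}"] infinite_Diff_maxsubgroup[OF fin AZ A(2)] AZ r by auto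
  then show ?thesis
    by blast
qed

end

locale Zset_sequence = Zset_setting e l + stable_sequence x
  for e :: "'a::semigroup_mult" and l :: nat and x :: "nat \<Rightarrow> 'a" +
  assumes x_mem: "x i \<in> Z" and inj: "inj x" and fin: "finite (Z \<inter> H)"
begin

lemma monomial_mem_Zset: "a \<ge> 1 \<Longrightarrow> monomial i a s \<in> Z"
  by (simp add: monomial_def spow_mem_Zset x_mem Zset_mult)

lemma monomial_mem_maxsubgroup:
  assumes "a \<ge> 1" "l \<le> a \<or> l \<le> s"
  shows "monomial i a s \<in> H"
proof (cases "l \<le> a")
  case True
  have p: "spow (x i) a \<in> Z" "spow (x i) a \<in> H"
    using spow_mem_Zset spow_mem_maxsubgroup x_mem True assms(1) by blast+
  show ?thesis
  proof (cases "s = 0")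
    case False
    then have "spow (x (Suc i)) s \<in> Z"
      using spow_mem_Zset x_mem by simp
    then have "spow (x (Suc i)) s * spow (x i) a \<in> H"
      using Zset_mult_maxsubgroup p by blast
    with False show ?thesis
      using centerD[OF spow_mem_center[OF central[of i] assms(1)], of "spow (x (Suc i)) s"]
      by (simp add: monomial_def)
  qed (use p in \<open>simp add: monomial_def\<close>)
next
  case False
  then have "s \<ge> 1" "spow (x (Suc i)) s \<in> Z" "spow (x (Suc i)) s \<in> H"
    using assms(2) l_pos spow_mem_maxsubgroup spow_mem_Zset x_mem by auto
  then show ?thesis
    using Zset_mult_maxsubgroup spow_mem_Zset x_mem assms(1) by (simp add: monomial_def)
qed

lemma two_le_exponent: "l \<ge> 2"
proof (rule ccontr)
  assume "\<not> l \<ge> 2"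
  then have "l = 1"
    using l_pos by simp
  then have "range x \<subseteq> Z \<inter> H"
    using x_mem ZsetD by auto
  then have "finite (range x)"
    using fin finite_subset by blast
  then show False
    using inj finite_imageD by blast
qed

definition settled_on :: "nat set \<Rightarrow> nat \<Rightarrow> nat \<Rightarrow> bool" where
  "settled_on Y a s \<longleftrightarrow>
     (\<forall>i\<in>Y. monomial i a s \<in> H) \<or> (\<forall>i\<in>Y. \<forall>j\<in>Y. monomial i a s = monomial j a s)"

lemma settled_onD:
  assumes "settled_on Y a s" "i \<in> Y" "i0 \<in> Y"
  shows "monomial i a s \<in> insert (monomial i0 a s) H"
    and "monomial i0 a s \<in> H \<or> monomial i0 a s = monomial i a s"
  using assms unfolding settled_on_def by blast+

text \<open>Exponent pairs with \<open>a \<ge> l\<close> or \<open>s \<ge> l\<close> give elements of \<open>H\<close>, so Ramsey's theorem is only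
  needed for the finitely many others; \<open>(1, 0)\<close> is injective because \<open>x\<close> is.\<close>

lemma exists_maximal_injective_monomial:
  obtains Y a s where "infinite Y" "a \<ge> 1" "inj_on (\<lambda>i. monomial i a s) Y"
    "\<And>a' s'. a' \<ge> 1 \<Longrightarrow> a + s < a' + s' \<Longrightarrow> settled_on Y a' s'"
proof -
  define B where "B = {1..<l} \<times> {0..<l}"
  have "finite B"
    unfolding B_def by simp
  define g where "g p i = monomial i (fst p) (snd p)" for p i
  obtain Y where Y: "infinite Y"
    and dichotomy: "\<And>p. p \<in> B \<Longrightarrow> inj_on (g p) Y \<or> (\<forall>i\<in>Y. \<forall>j\<in>Y. g p i = g p j)"
    using infinite_subset_constant_or_inj_family[OF \<open>finite B\<close> infinite_UNIV_nat, of g] by metis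
  define J where "J = {p \<in> B. inj_on (g p) Y}"
  have "g (1, 0) = x"
    by (simp add: g_def monomial_def fun_eq_iff)
  then have "(1, 0) \<in> J"
    unfolding J_def B_def using two_le_exponent inj_on_subset[OF inj, of Y] by simp
  moreover have "\<forall>p. p \<in> J \<longrightarrow> fst p + snd p < 2 * l"
    unfolding J_def B_def by (auto simp: mem_Times_iff)
  ultimately have "\<exists>p. p \<in> J \<and> (\<forall>q. q \<in> J \<longrightarrow> fst q + snd q \<le> fst p + snd p)"
    by (rule Lattices_Big.ex_has_greatest_nat)
  then obtain p where p: "p \<in> J" and p_max: "\<And>q. q \<in> J \<Longrightarrow> fst q + snd q \<le> fst p + snd p"
    by blast
  show ?thesis
  proof (rule that[OF Y])
    show "fst p \<ge> 1" "inj_on (\<lambda>i. monomial i (fst p) (snd p)) Y"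
      using p unfolding J_def B_def g_def by auto
  next
    fix a' s' assume a': "a' \<ge> 1" and larger: "fst p + snd p < a' + s'"
    show "settled_on Y a' s'"
    proof (cases "(a', s') \<in> B")
      case True
      have "(a', s') \<notin> J"
        using p_max[of "(a', s')"] larger by fastforce
      then have "\<forall>i\<in>Y. \<forall>j\<in>Y. g (a', s') i = g (a', s') j"
        using dichotomy[OF True] True unfolding J_def by blast
      then show ?thesis
        unfolding settled_on_def g_def prod.sel by blast
    next
      case False
      then have "l \<le> a' \<or> l \<le> s'"
        using a' unfolding B_def by auto
      then show ?thesis
        unfolding settled_on_def using monomial_mem_maxsubgroup[OF a'] by blast
    qed
  qed
qed

lemma monomial_product_settled:
  assumes a: "a \<ge> 1" and settled: "settled_on Y a (2 * s + a)" "settled_on Y (2 * a) (2 * s)"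
    and Y: "i0 \<in> Y" "i \<in> Y" "j \<in> Y"
  shows "monomial i a s * monomial j a s
    \<in> {monomial i0 a (2 * s + a), monomial i0 (2 * a) (2 * s)} \<union> H"
proof -
  have later: "monomial i a s * monomial j a s \<in> insert (monomial i0 a (2 * s + a)) H"
    if "i \<in> Y" "i < j" for i j
    using monomial_mult_monomial_later[OF that(2) a] settled_onD(1)[OF settled(1) that(1) Y(1)]
    by simp
  consider "i < j" | "i = j" | "j < i"
    by linarith
  then show ?thesis
  proof cases
    case 1
    then show ?thesis
      using later Y(2) by blast
  next
    case 2
    then show ?thesis
      using monomial_square[OF a] settled_onD(1)[OF settled(2) Y(2,1)] by simp
  next
    case 3
    have "monomial i a s * monomial j a s = monomial j a s * monomial i a s"
      by (rule centerD[OF monomial_mem_center[OF a]])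
    then show ?thesis
      using later[OF Y(3) 3] by auto
  qed
qed

lemma monomial_divides_settled:
  assumes a: "a \<ge> 1" and settled: "settled_on Y a (2 * s + a)" "settled_on Y (2 * a) (2 * s)"
    and Y: "i0 \<in> Y" "i \<in> Y"
    and f: "f \<in> {monomial i0 a (2 * s + a), monomial i0 (2 * a) (2 * s)}"
  shows "f \<in> H \<or> (\<exists>b\<in>Z. f = monomial i a s * b)"
proof -
  have "monomial i a (2 * s + a) = monomial i a s * spow (x (Suc i)) (s + a)"
    "spow (x (Suc i)) (s + a) \<in> Z"
    using monomial_double_tail[OF a] spow_mem_Zset[OF x_mem] a by auto
  then have "monomial i0 a (2 * s + a) \<in> H \<or> (\<exists>b\<in>Z. monomial i0 a (2 * s + a) = monomial i a s * b)"
    using settled_onD(2)[OF settled(1) Y(2,1)] by auto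
  moreover have "monomial i (2 * a) (2 * s) = monomial i a s * monomial i a s" "monomial i a s \<in> Z"
    using monomial_square[OF a] monomial_mem_Zset[OF a] by auto
  then have "monomial i0 (2 * a) (2 * s) \<in> H \<or> (\<exists>b\<in>Z. monomial i0 (2 * a) (2 * s) = monomial i a s * b)"
    using settled_onD(2)[OF settled(2) Y(2,1)] by auto
  ultimately show ?thesis
    using f by blast
qed

lemma witness_pair_exists: "\<exists>F A. witness_pair F A"
proof -
  obtain Y a s where Y: "infinite Y" and a: "a \<ge> 1" and inj: "inj_on (\<lambda>i. monomial i a s) Y"
    and settled: "\<And>a' s'. a' \<ge> 1 \<Longrightarrow> a + s < a' + s' \<Longrightarrow> settled_on Y a' s'"
    using exists_maximal_injective_monomial by blast
  have settled_products: "settled_on Y a (2 * s + a)" "settled_on Y (2 * a) (2 * s)"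
    using settled a by auto
  obtain i0 where "i0 \<in> Y"
    using Y infinite_imp_nonempty by blast
  define F where "F = {monomial i0 a (2 * s + a), monomial i0 (2 * a) (2 * s)}"
  define A where "A = (\<lambda>i. monomial i a s) ` Y - H"
  have "(\<lambda>i. monomial i a s) ` Y \<subseteq> Z" "infinite ((\<lambda>i. monomial i a s) ` Y)"
    using monomial_mem_Zset[OF a] Y inj finite_imageD by blast+
  then have "infinite A"
    unfolding A_def using infinite_Diff_maxsubgroup[OF fin] by blast
  moreover have "card F \<le> 2"
    unfolding F_def by (simp add: card_insert_if)
  moreover have "w * w' \<in> F \<union> H" if "w \<in> A" "w' \<in> A" for w w'
    using that monomial_product_settled[OF a settled_products \<open>i0 \<in> Y\<close>] unfolding A_def F_def by blast
  moreover have "f \<in> H \<or> (\<exists>b\<in>Z. f = w * b)" if "w \<in> A" "f \<in> F" for w f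
    using that monomial_divides_settled[OF a settled_products \<open>i0 \<in> Y\<close>] unfolding A_def F_def by blast
  moreover have "A \<subseteq> Z - H"
    unfolding A_def using monomial_mem_Zset a by blast
  ultimately have "witness_pair F A"
    using witness_pairI[of A F] unfolding F_def by blast
  then show ?thesis
    by blast
qed

end

context Zset_setting
begin

lemma witness_pair_if_finite_multiples:
  assumes fin: "finite (Z \<inter> H)" and mult_fin: "\<And>b. b \<in> Z \<Longrightarrow> finite ((\<lambda>z. b * z) ` Z)"
    and inf: "infinite (Z - H)"
  shows "\<exists>F A. witness_pair F A"
proof -
  have "finite ((\<lambda>y. b * y) ` (Z - H))" if "b \<in> Z - H" for b
    using mult_fin[of b] that finite_subset[of "(\<lambda>y. b * y) ` (Z - H)"] by blast
  then obtain x :: "nat \<Rightarrow> 'a" where x: "inj x" "range x \<subseteq> Z - H"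
    and stable: "\<And>i j k. i < j \<Longrightarrow> i < k \<Longrightarrow> x i * x j = x i * x k"
    using infinite_sequence_stable_products[OF inf] by blast
  interpret Zset_sequence e l x
    by unfold_locales (use x stable ZsetD fin in blast)+
  show ?thesis
    by (rule witness_pair_exists)
qed

lemma witness_pair_if_infinite_Diff:
  assumes "infinite (Z - H)"
  shows "\<exists>F A. witness_pair F A"
proof -
  consider "infinite (Z \<inter> H)"
    | "finite (Z \<inter> H)" and "\<exists>b\<in>Z. infinite ((\<lambda>z. b * z) ` Z)"
    | "finite (Z \<inter> H)" and "\<forall>b\<in>Z. finite ((\<lambda>z. b * z) ` Z)"
    by blast
  then show ?thesis
  proof cases
    case 1
    then show ?thesis
      using witness_pair_Zset_inter_maxsubgroup by blast
  next
    case 2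
    then show ?thesis
      using witness_pair_if_infinite_multiples by blast
  next
    case 3
    then show ?thesis
      using witness_pair_if_finite_multiples assms by blast
  qed
qed

end

theorem mainTheorem18:
  fixes e :: "'a::semigroup_mult" and l :: nat
  assumes "periodic_sg TYPE('a)"
    and "e \<in> idempotents"
    and "l \<ge> 1"
    and "infinite (Zset e l - maxsubgroup e)"
  shows "\<exists>F' A'. F' \<subseteq> (UNIV :: 'a set) \<and> finite F' \<and> card F' \<le> 2 \<and>
           infinite A' \<and> A' \<subseteq> Zset e l \<and>
           setprod A' \<subseteq> F' \<union> maxsubgroup e \<and>
           A' \<inter> right_ideal1 F' = {}"
proof -
  interpret Zset_setting e l
    using assms(3) by unfold_locales
  obtain F A where "witness_pair F A"
    using witness_pair_if_infinite_Diff assms(4) by blast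
  then show ?thesis
    unfolding witness_pair_def by blast
qed

end
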